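(* Let $R$ be a semisimple ring and $(a,b)\in R^2$. Then the cyclic submodule $R(a,b)$ is free if and only if $(a,b)$ is admissible.
   Context: All rings are associative with identity $1\neq0$. $R^2$ is the free left $R$-module of pairs; $R(a,b)=\{(\alpha a,\alpha b):\alpha\in R\}$ is free if $r(a,b)=(0,0)$ implies $r=0$. A pair $(a,b)$ is admissible if there exist $c,d\in R$ such that $\begin{pmatrix}a&b\\c&d\end{pmatrix}\in GL_2(R)$. *)

theory Defs
  imports Main
begin

definition left_ideal :: "'a::ring_1 set \<Rightarrow> bool" where
  "left_ideal I \<longleftrightarrow> 0 \<in> I \<and> (\<forall>x\<in>I. \<forall>y\<in>I. x + y \<in> I) \<and> (\<forall>r x. x \<in> I \<longrightarrow> r * x \<in> I)"

text \<open>R is (left) semisimple: the left regular module R is semisimple, i.e. every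
left ideal is a direct summand of R.\<close>
definition semisimple_ring :: "'a::ring_1 itself \<Rightarrow> bool" where
  "semisimple_ring _ \<longleftrightarrow>
     (\<forall>I::'a set. left_ideal I \<longrightarrow>
        (\<exists>J. left_ideal J \<and> I \<inter> J = {0} \<and> (\<forall>x. \<exists>i\<in>I. \<exists>j\<in>J. x = i + j)))"

text \<open>The 2x2 matrix with rows (a,b),(c,d) lies in GL_2(R): it has a two-sided inverse.\<close>
definition in_GL2 :: "'a::ring_1 \<Rightarrow> 'a \<Rightarrow> 'a \<Rightarrow> 'a \<Rightarrow> bool" where
  "in_GL2 a b c d \<longleftrightarrow> (\<exists>e f g h.
      a*e + b*g = 1 \<and> a*f + b*h = 0 \<and> c*e + d*g = 0 \<and> c*f + d*h = 1 \<and>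
      e*a + f*c = 1 \<and> e*b + f*d = 0 \<and> g*a + h*c = 0 \<and> g*b + h*d = 1)"

definition admissible :: "'a::ring_1 \<Rightarrow> 'a \<Rightarrow> bool" where
  "admissible a b \<longleftrightarrow> (\<exists>c d. in_GL2 a b c d)"

definition cyclic_free :: "'a::ring_1 \<Rightarrow> 'a \<Rightarrow> bool" where
  "cyclic_free a b \<longleftrightarrow> (\<forall>r. r * a = 0 \<and> r * b = 0 \<longrightarrow> r = 0)"

end

theory Submission
  imports Defs
begin

text \<open>A row of an invertible matrix has a right inverse column, so \<open>r(a, b) = 0\<close> forces \<open>r = 0\<close>.
  Conversely, a semisimple ring is unit-regular: \<open>R a\<close> is a direct summand, which gives \<open>a x a = a\<close>;
  the idempotents \<open>a x\<close> and \<open>x a\<close> are isomorphic, and cancellation of isomorphic idempotents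
  (Krull--Schmidt for \<open>R\<close>, by induction along the ascending chain condition, splitting off one
  simple summand at a time) makes \<open>1 - a x\<close> and \<open>1 - x a\<close> isomorphic as well, which produces a
  unit \<open>w\<close> with \<open>a w a = a\<close>. After the column operations turning \<open>(a, b)\<close> into
  \<open>(e, (1 - e) b)\<close> with \<open>e = a w\<close> idempotent, freeness says that \<open>(1 - e) b\<close> generates \<open>1 - e\<close>,
  and an explicit involutive matrix completes the row.\<close>

lemma left_ideal_zero: "left_ideal I \<Longrightarrow> 0 \<in> I"
  and left_ideal_add: "left_ideal I \<Longrightarrow> x \<in> I \<Longrightarrow> y \<in> I \<Longrightarrow> x + y \<in> I"
  and left_ideal_mult: "left_ideal I \<Longrightarrow> x \<in> I \<Longrightarrow> r * x \<in> I"
  unfolding left_ideal_def by blast+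

lemma left_ideal_diff: "left_ideal I \<Longrightarrow> x \<in> I \<Longrightarrow> y \<in> I \<Longrightarrow> x - y \<in> I"
  using left_ideal_add[of I x "(-1) * y"] left_ideal_mult[of I y "-1"] by simp

lemma left_ideal_span2: "left_ideal {m * k + s * t | m s. True}"
  unfolding left_ideal_def
proof (intro conjI ballI allI impI)
  show "0 \<in> {m * k + s * t | m s. True}" by (auto intro!: exI[of _ 0])
next
  fix x y assume "x \<in> {m * k + s * t | m s. True}" "y \<in> {m * k + s * t | m s. True}"
  then obtain m1 s1 m2 s2 where "x = m1 * k + s1 * t" "y = m2 * k + s2 * t" by blast
  then have "x + y = (m1 + m2) * k + (s1 + s2) * t" by (simp add: algebra_simps)
  then show "x + y \<in> {m * k + s * t | m s. True}" by blast
next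
  fix r x assume "x \<in> {m * k + s * t | m s. True}"
  then obtain m s where "x = m * k + s * t" by blast
  then have "r * x = (r * m) * k + (r * s) * t" by (simp add: algebra_simps mult.assoc)
  then show "r * x \<in> {m * k + s * t | m s. True}" by blast
qed

lemma left_ideal_annihilator: "left_ideal {r. r * c = 0}"
  unfolding left_ideal_def by (simp add: algebra_simps mult.assoc)

lemma semisimple_left_ideal_right_unit:
  fixes I :: "'a::ring_1 set"
  assumes "semisimple_ring TYPE('a)" and I: "left_ideal I"
  obtains e where "e \<in> I" "\<And>x. x \<in> I \<Longrightarrow> x * e = x"
proof -
  obtain J where J: "left_ideal J" "I \<inter> J = {0}" "\<forall>x. \<exists>i\<in>I. \<exists>j\<in>J. x = i + j"
    using assms(1)[unfolded semisimple_ring_def, rule_format, OF I] by (elim exE conjE) (rule that)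
  obtain e j where e: "e \<in> I" "j \<in> J" "1 = e + j" using J(3) by blast
  have "x * e = x" if x: "x \<in> I" for x
  proof -
    have "x = x * e + x * j" using arg_cong[OF e(3), of "(*) x"] by (simp add: distrib_left)
    then have xj: "x * j = x - x * e" by (simp add: algebra_simps)
    have "x * j \<in> I"
      using xj left_ideal_diff[OF I x left_ideal_mult[OF I e(1)]] by simp
    moreover have "x * j \<in> J" using left_ideal_mult[OF J(1) e(2)] .
    ultimately have "x * j = 0" using J(2) by blast
    then show ?thesis using xj by simp
  qed
  then show ?thesis using that e(1) by blast
qed

definition left_ideal_ascent :: "('a::ring_1 set \<times> 'a set) set" where
  "left_ideal_ascent = {(B, A). A \<subset> B \<and> left_ideal A \<and> left_ideal B}"

text \<open>Ascending chain condition: a strictly increasing chain of left ideals has a union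
  generated by a single right unit, which already lies in some member of the chain.\<close>
lemma wf_left_ideal_ascent:
  assumes ss: "semisimple_ring TYPE('a::ring_1)"
  shows "wf (left_ideal_ascent :: ('a set \<times> 'a set) set)"
  unfolding wf_iff_no_infinite_down_chain
proof
  assume "\<exists>f. \<forall>i. (f (Suc i), f i) \<in> (left_ideal_ascent :: ('a set \<times> 'a set) set)"
  then obtain f :: "nat \<Rightarrow> 'a set"
    where "\<forall>i. (f (Suc i), f i) \<in> (left_ideal_ascent :: ('a set \<times> 'a set) set)"
    by (elim exE)
  then have f: "\<And>i. f i \<subset> f (Suc i)" "\<And>i. left_ideal (f i)"
    unfolding left_ideal_ascent_def by auto
  have mono: "f i \<subseteq> f j" if "i \<le> j" for i j
    using lift_Suc_mono_le[of f, OF less_imp_le[OF f(1)] that] .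
  define U where "U = (\<Union>i. f i)"
  have "left_ideal U"
    unfolding left_ideal_def
  proof (intro conjI ballI allI impI)
    show "0 \<in> U" unfolding U_def using left_ideal_zero[OF f(2)] by blast
  next
    fix x y assume "x \<in> U" "y \<in> U"
    then obtain i j where "x \<in> f i" "y \<in> f j" unfolding U_def by blast
    then have "x \<in> f (max i j)" "y \<in> f (max i j)"
      using mono[of i "max i j"] mono[of j "max i j"] by auto
    then show "x + y \<in> U" unfolding U_def using left_ideal_add[OF f(2)] by blast
  next
    fix r x assume "x \<in> U"
    then show "r * x \<in> U" unfolding U_def using left_ideal_mult[OF f(2)] by blast
  qed
  then obtain u where u: "u \<in> U" "\<And>x. x \<in> U \<Longrightarrow> x * u = x"
    using semisimple_left_ideal_right_unit[OF ss] by blast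
  obtain N where uN: "u \<in> f N" using u(1) unfolding U_def by blast
  obtain z where z: "z \<in> f (Suc N)" "z \<notin> f N" using f(1)[of N] by blast
  have "z * u \<in> f N" using left_ideal_mult[OF f(2) uN] .
  moreover have "z * u = z" using u(2) z(1) unfolding U_def by blast
  ultimately show False using z(2) by simp
qed

lemma semisimple_regular:
  fixes a :: "'a::ring_1"
  assumes ss: "semisimple_ring TYPE('a)"
  obtains x where "a * x * a = a"
proof -
  obtain e where e: "e \<in> {m * a + s * a | m s. True}"
      "\<And>z. z \<in> {m * a + s * a | m s. True} \<Longrightarrow> z * e = z"
    using semisimple_left_ideal_right_unit[OF ss left_ideal_span2] by blast
  obtain m s where "e = m * a + s * a" using e(1) by blast
  moreover have "a \<in> {m * a + s * a | m s. True}"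
    by (rule CollectI, rule exI[of _ 1], rule exI[of _ 0]) simp
  then have "a * e = a" using e(2) by blast
  ultimately have "a * (m + s) * a = a" by (simp add: algebra_simps mult.assoc)
  then show thesis by (rule that)
qed

definition orth_idem_decomp :: "'a::ring_1 \<Rightarrow> 'a \<Rightarrow> 'a \<Rightarrow> bool" where
  "orth_idem_decomp h p q \<longleftrightarrow> p * p = p \<and> q * q = q \<and> p * q = 0 \<and> q * p = 0 \<and> h = p + q"

text \<open>For idempotents, \<open>idem_iso p q\<close> says \<open>R p \<cong> R q\<close> as left modules: right multiplication
  by \<open>X\<close> and by \<open>Y\<close> are mutually inverse isomorphisms.\<close>
definition idem_iso :: "'a::ring_1 \<Rightarrow> 'a \<Rightarrow> bool" where
  "idem_iso p q \<longleftrightarrow> (\<exists>X Y. X = p * X * q \<and> Y = q * Y * p \<and> X * Y = p \<and> Y * X = q)"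

text \<open>\<open>R p\<close> is a minimal left ideal.\<close>
definition minimal_idem :: "'a::ring_1 \<Rightarrow> bool" where
  "minimal_idem p \<longleftrightarrow> p \<noteq> 0 \<and> (\<forall>t. t * p = t \<longrightarrow> t = 0 \<or> (\<exists>s. s * t = p))"

lemma orth_idem_decompD:
  assumes "orth_idem_decomp h p q"
  shows "p * p = p" "q * q = q" "p * q = 0" "q * p = 0" "h = p + q"
    "p * h = p" "h * p = p" "q * h = q" "h * q = q" "h * h = h"
  using assms unfolding orth_idem_decomp_def by (auto simp: algebra_simps)

lemma idem_isoE:
  assumes "idem_iso p q"
  obtains X Y where "X = p * X * q" "Y = q * Y * p" "X * Y = p" "Y * X = q"
  using assms unfolding idem_iso_def by blast

lemma idem_corner_absorb:
  fixes X p q :: "'a::ring_1"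
  assumes X: "X = p * X * q" and "p * p = p" and "q * q = q"
  shows "p * X = X" "X * q = X"
proof -
  have "p * X = p * (p * X * q)" using arg_cong[OF X, of "(*) p"] .
  also have "\<dots> = (p * p) * X * q" by (simp add: mult.assoc)
  finally show "p * X = X" using assms by simp
  have "X * q = (p * X * q) * q" using arg_cong[OF X, of "\<lambda>z. z * q"] .
  also have "\<dots> = p * X * (q * q)" by (simp add: mult.assoc)
  finally show "X * q = X" using assms by simp
qed

lemma idem_iso_refl: "p * p = p \<Longrightarrow> idem_iso p p"
  unfolding idem_iso_def by (rule exI[of _ p], rule exI[of _ p]) (simp add: mult.assoc)

lemma idem_iso_sym: "idem_iso p q \<Longrightarrow> idem_iso q p"
  unfolding idem_iso_def by blast

lemma idem_iso_trans:
  fixes p q r :: "'a::ring_1"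
  assumes "p * p = p" "q * q = q" "r * r = r" "idem_iso p q" "idem_iso q r"
  shows "idem_iso p r"
proof -
  obtain X1 Y1 where 1: "X1 = p * X1 * q" "Y1 = q * Y1 * p" "X1 * Y1 = p" "Y1 * X1 = q"
    using assms(4) by (rule idem_isoE)
  obtain X2 Y2 where 2: "X2 = q * X2 * r" "Y2 = r * Y2 * q" "X2 * Y2 = q" "Y2 * X2 = r"
    using assms(5) by (rule idem_isoE)
  note a = idem_corner_absorb[OF 1(1) assms(1,2)] and b = idem_corner_absorb[OF 1(2) assms(2,1)]
    and c = idem_corner_absorb[OF 2(1) assms(2,3)] and d = idem_corner_absorb[OF 2(2) assms(3,2)]
  show ?thesis unfolding idem_iso_def
  proof (intro exI conjI)
    show "X1 * X2 = p * (X1 * X2) * r" using a c by (metis mult.assoc)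
    show "Y2 * Y1 = r * (Y2 * Y1) * p" using b d by (metis mult.assoc)
    have "X1 * X2 * (Y2 * Y1) = X1 * (X2 * Y2) * Y1" by (simp add: mult.assoc)
    then show "X1 * X2 * (Y2 * Y1) = p" using 2(3) a(2) 1(3) by simp
    have "Y2 * Y1 * (X1 * X2) = Y2 * (Y1 * X1) * X2" by (simp add: mult.assoc)
    then show "Y2 * Y1 * (X1 * X2) = r" using 1(4) d(2) 2(4) by simp
  qed
qed

lemma idem_iso_zero: "idem_iso 0 p \<Longrightarrow> p = 0"
  unfolding idem_iso_def by auto

lemma idem_iso_same_left_ideal:
  fixes p q :: "'a::ring_1"
  assumes "p * p = p" "q * q = q" "p * q = p" "q * p = q"
  shows "idem_iso p q"
  unfolding idem_iso_def by (rule exI[of _ p], rule exI[of _ q]) (simp add: assms mult.assoc)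

lemma idem_iso_add_orth:
  fixes p q k :: "'a::ring_1"
  assumes "p * p = p" "q * q = q" "k * k = k" "idem_iso p q"
    and "p * k = 0" "k * p = 0" "q * k = 0" "k * q = 0"
  shows "idem_iso (p + k) (q + k)"
proof -
  obtain X Y where 1: "X = p * X * q" "Y = q * Y * p" "X * Y = p" "Y * X = q"
    using assms(4) by (rule idem_isoE)
  note a = idem_corner_absorb[OF 1(1) assms(1,2)] and b = idem_corner_absorb[OF 1(2) assms(2,1)]
  have k: "X * k = 0" "k * X = 0" "Y * k = 0" "k * Y = 0"
    using a b assms(5-8) by (metis mult.assoc mult_zero_left mult_zero_right)+
  show ?thesis unfolding idem_iso_def
  proof (intro exI conjI)
    show "X + k = (p + k) * (X + k) * (q + k)" "Y + k = (q + k) * (Y + k) * (p + k)"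
      using a b k assms(3,5-8) by (simp_all add: distrib_left distrib_right mult.assoc[symmetric])
    show "(X + k) * (Y + k) = p + k" "(Y + k) * (X + k) = q + k"
      using k 1(3,4) assms(3) by (simp_all add: distrib_left distrib_right)
  qed
qed

lemma idem_iso_complements:
  fixes h d d' c c' :: "'a::ring_1"
  assumes A: "orth_idem_decomp h d c" and B: "orth_idem_decomp h d' c'"
    and "d * d' = d" "d' * d = d'"
  shows "idem_iso c c'"
proof -
  note a = orth_idem_decompD[OF A] and b = orth_idem_decompD[OF B]
  have "c * d' * c = c * (d' * d) * c" using assms(4) by simp
  then have "c * d' * c = c * d' * (d * c)" by (simp add: mult.assoc)
  then have "c * c' * c = c * h * c" using a(3) b(5) by (simp add: algebra_simps)
  then have cc'c: "c * c' * c = c" using a(2,8) by simp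
  have "c' * d * c' = c' * (d * d') * c'" using assms(3) by simp
  then have "c' * d * c' = c' * d * (d' * c')" by (simp add: mult.assoc)
  then have "c' * c * c' = c' * h * c'" using b(3) a(5) by (simp add: algebra_simps)
  then have c'cc': "c' * c * c' = c'" using b(2,8) by simp
  show ?thesis unfolding idem_iso_def
  proof (intro exI conjI)
    show "c * c' = c * (c * c') * c'" "c' * c = c' * (c' * c) * c"
      using a(2) b(2) by (metis mult.assoc)+
    show "c * c' * (c' * c) = c" "c' * c * (c * c') = c'"
      using cc'c c'cc' a(2) b(2) by (metis mult.assoc)+
  qed
qed

lemma minimal_idem_iso:
  fixes p q :: "'a::ring_1"
  assumes "p * p = p" "q * q = q" "minimal_idem p" "idem_iso p q"
  shows "minimal_idem q"
proof -
  obtain X Y where 1: "X = p * X * q" "Y = q * Y * p" "X * Y = p" "Y * X = q"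
    using assms(4) by (rule idem_isoE)
  note b = idem_corner_absorb[OF 1(2) assms(2,1)]
  have "q \<noteq> 0" using assms(3) 1 unfolding minimal_idem_def by (metis mult_zero_left mult_zero_right)
  moreover have "\<exists>s. s * t = q" if t: "t * q = t" "t \<noteq> 0" for t
  proof -
    have "t * Y \<noteq> 0"
    proof
      assume "t * Y = 0"
      then have "t * (Y * X) = 0" by (simp add: mult.assoc[symmetric])
      then show False using t 1(4) by simp
    qed
    moreover have "t * Y * p = t * Y" using b by (simp add: mult.assoc)
    ultimately obtain s where "s * (t * Y) = p" using assms(3) unfolding minimal_idem_def by blast
    moreover have "Y * s * t * (Y * X) = Y * (s * (t * Y)) * X" by (simp add: mult.assoc)
    ultimately have "Y * s * t * q = Y * p * X" using 1(4) by simp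
    then have "Y * s * t = q" using t(1) b(2) 1(4) by (simp add: mult.assoc)
    then show ?thesis by blast
  qed
  ultimately show ?thesis unfolding minimal_idem_def by blast
qed

text \<open>If \<open>R p' \<subseteq> R q\<close>, then \<open>R q = R r \<oplus> R k\<close> with \<open>r = q p'\<close> generating \<open>R p'\<close>, and
  \<open>h = r + (p + k)\<close> is a second decomposition of \<open>h\<close> through \<open>R p'\<close>.\<close>
lemma idem_iso_cancel_contained:
  fixes h p q p' q' :: "'a::ring_1"
  assumes A: "orth_idem_decomp h p q" and B: "orth_idem_decomp h p' q'"
    and i: "idem_iso p p'" and sub: "p' * q = p'"
  shows "idem_iso q q'"
proof -
  note a = orth_idem_decompD[OF A] and b = orth_idem_decompD[OF B]
  define r where "r = q * p'"
  have r: "r * r = r" "r * q = r" "q * r = r" "p' * r = p'" "r * p' = r"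
    unfolding r_def using sub b(1) a(2) by (metis mult.assoc)+
  define k where "k = q - r"
  have k: "k * k = k" "r * k = 0" "k * r = 0"
    unfolding k_def using a(2) r(1-3) by (simp_all add: algebra_simps)
  have "p' * p = 0" using sub a(4) by (metis mult.assoc mult_zero_right)
  then have pr: "p * r = 0" "r * p = 0"
    unfolding r_def using a(3) by (metis mult.assoc mult_zero_left mult_zero_right)+
  have pk: "p * k = 0" "k * p = 0" unfolding k_def using a(3,4) pr by (simp_all add: algebra_simps)
  have "idem_iso p r" using idem_iso_trans[OF a(1) b(1) r(1) i idem_iso_same_left_ideal[OF b(1) r(1,4,5)]] .
  then have "idem_iso (p + k) (r + k)" using idem_iso_add_orth[OF a(1) r(1) k(1) _ pk k(2,3)] by blast
  moreover have q: "r + k = q" unfolding k_def by simp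
  moreover have pk_idem: "(p + k) * (p + k) = p + k" using a(1) k(1) pk by (simp add: algebra_simps)
  moreover have "orth_idem_decomp h r (p + k)" unfolding orth_idem_decomp_def
    using r(1) pk_idem pr k(2,3) a(5) q by (simp add: algebra_simps)
  then have "idem_iso (p + k) q'" using idem_iso_complements[OF _ B r(5,4)] by blast
  ultimately show ?thesis using idem_iso_trans[OF a(2) pk_idem b(2)] idem_iso_sym by metis
qed

text \<open>If \<open>R p' \<inter> R q = 0\<close> with \<open>R p\<close>, \<open>R p'\<close> simple, then \<open>h = u + q\<^sub>2\<close> with \<open>R u = R p'\<close> and
  \<open>R q\<^sub>2 = R q\<close>, where \<open>u\<close> comes from \<open>R (p' p) = R p\<close>.\<close>
lemma idem_iso_cancel_minimal_disjoint:
  fixes h p q p' q' :: "'a::ring_1"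
  assumes A: "orth_idem_decomp h p q" and B: "orth_idem_decomp h p' q'"
    and m: "minimal_idem p" and m': "minimal_idem p'" and not_sub: "p' * q \<noteq> p'"
  shows "idem_iso q q'"
proof -
  note a = orth_idem_decompD[OF A] and b = orth_idem_decompD[OF B]
  have disjoint: "t = 0" if t: "t * p' = t" "t * q = t" for t
  proof (rule ccontr)
    assume "t \<noteq> 0"
    then obtain s where "s * t = p'" using m' t(1) unfolding minimal_idem_def by blast
    then have "p' * q = p'" using t(2) by (metis mult.assoc)
    then show False using not_sub by simp
  qed
  have "p' * p \<noteq> 0"
  proof
    assume "p' * p = 0"
    then have "p' * q = p'" using b(6) a(5) by (simp add: algebra_simps)
    then show False using not_sub by simp
  qed
  moreover have "p' * p * p = p' * p" using a(1) by (simp add: mult.assoc)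
  ultimately obtain s where s: "s * (p' * p) = p" using m unfolding minimal_idem_def by blast
  define u where "u = h * s * p'"
  have "h * u = u" unfolding u_def using a(10) by (simp add: mult.assoc[symmetric])
  then have u: "u * p' = u" "h * u = u" "u * h = u" "u * p = p"
    unfolding u_def using b(1,6) a(7) s by (simp_all add: mult.assoc)
  define q2 where "q2 = q - u * q"
  have h: "h = u + q2"
    unfolding q2_def using a(5) u(3,4) by (simp add: algebra_simps)
  have q2q: "q2 * q = q2" unfolding q2_def using a(2) by (simp add: algebra_simps mult.assoc)
  have "q * u * q = q * u"
  proof -
    have "q * u = q - q * q2" using a(8) h by (simp add: algebra_simps)
    moreover have "(q - q * q2) * q = q - q * q2" using a(2) q2q by (simp add: algebra_simps mult.assoc)
    ultimately show ?thesis by simp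
  qed
  moreover have "q * u * p' = q * u" using u(1) by (simp add: mult.assoc)
  ultimately have qu: "q * u = 0" using disjoint by blast
  have qq2: "q * q2 = q" unfolding q2_def using a(2) qu by (simp add: algebra_simps mult.assoc[symmetric])
  have q2h: "q2 * h = q2" "h * q2 = q2"
    unfolding q2_def using a(8,9) u(2) by (simp_all add: algebra_simps mult.assoc[symmetric])
  have q2u: "q2 * u = 0" unfolding q2_def using qu by (simp add: left_diff_distrib mult.assoc)
  have "orth_idem_decomp h u q2"
    unfolding orth_idem_decomp_def using h q2h u(3) q2u by (simp add: algebra_simps)
  moreover have "p' * u = p'"
  proof -
    have "u \<noteq> 0" using u(4) m unfolding minimal_idem_def by auto
    then obtain s' where "s' * u = p'" using m' u(1) unfolding minimal_idem_def by blast
    moreover have "u * u = u" using \<open>orth_idem_decomp h u q2\<close> by (rule orth_idem_decompD)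
    ultimately show ?thesis by (metis mult.assoc)
  qed
  ultimately have "idem_iso q2 q'" using idem_iso_complements[OF _ B u(1)] by blast
  moreover have "q2 * q2 = q2" using \<open>orth_idem_decomp h u q2\<close> by (rule orth_idem_decompD)
  ultimately show ?thesis
    using idem_iso_trans[OF a(2) _ b(2) idem_iso_same_left_ideal[OF a(2) _ qq2 q2q]] by blast
qed

lemma idem_iso_cancel_minimal:
  fixes h p q p' q' :: "'a::ring_1"
  assumes A: "orth_idem_decomp h p q" and B: "orth_idem_decomp h p' q'"
    and "minimal_idem p" and "idem_iso p p'"
  shows "idem_iso q q'"
proof (cases "p' * q = p'")
  case True
  then show ?thesis using idem_iso_cancel_contained[OF A B assms(4)] by blast
next
  case False
  have "minimal_idem p'"
    using minimal_idem_iso[OF orth_idem_decompD(1)[OF A] orth_idem_decompD(1)[OF B] assms(3,4)] .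
  then show ?thesis using idem_iso_cancel_minimal_disjoint[OF A B assms(3) _ False] by blast
qed

lemma maximal_left_ideal_avoiding:
  fixes p :: "'a::ring_1"
  assumes ss: "semisimple_ring TYPE('a)" and "p \<noteq> 0"
  obtains K where "left_ideal K" "\<And>x. x \<in> K \<Longrightarrow> x * p = x" "p \<notin> K"
    "\<And>K'. left_ideal K' \<Longrightarrow> K \<subset> K' \<Longrightarrow> (\<And>x. x \<in> K' \<Longrightarrow> x * p = x) \<Longrightarrow> p \<in> K'"
proof -
  define F where "F = {K::'a set. left_ideal K \<and> (\<forall>x\<in>K. x * p = x) \<and> p \<notin> K}"
  have "{0} \<in> F" unfolding F_def left_ideal_def using assms(2) by auto
  then obtain K where K: "K \<in> F" and max: "\<And>K'. (K', K) \<in> left_ideal_ascent \<Longrightarrow> K' \<notin> F"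
    using wfE_min[OF wf_left_ideal_ascent[OF ss]] by metis
  show thesis
  proof (rule that)
    show "left_ideal K" "\<And>x. x \<in> K \<Longrightarrow> x * p = x" "p \<notin> K" using K unfolding F_def by auto
    fix K' assume K': "left_ideal K'" "K \<subset> K'" "\<And>x. x \<in> K' \<Longrightarrow> x * p = x"
    then have "(K', K) \<in> left_ideal_ascent"
      using K unfolding left_ideal_ascent_def F_def by auto
    then show "p \<in> K'" using max K' unfolding F_def by blast
  qed
qed

text \<open>The complement of a maximal left ideal \<open>K = R k\<close> inside \<open>R p\<close> is simple.\<close>
lemma exists_minimal_idem_summand:
  fixes p :: "'a::ring_1"
  assumes ss: "semisimple_ring TYPE('a)" and pp: "p * p = p" and "p \<noteq> 0"
  obtains p1 p2 where "orth_idem_decomp p p1 p2" "minimal_idem p1"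
proof -
  obtain K where K: "left_ideal K" "\<And>x. x \<in> K \<Longrightarrow> x * p = x" "p \<notin> K"
    and max: "\<And>K'. left_ideal K' \<Longrightarrow> K \<subset> K' \<Longrightarrow> (\<And>x. x \<in> K' \<Longrightarrow> x * p = x) \<Longrightarrow> p \<in> K'"
    using maximal_left_ideal_avoiding[OF ss assms(3)] by blast
  obtain k where k: "k \<in> K" "\<And>x. x \<in> K \<Longrightarrow> x * k = x"
    using semisimple_left_ideal_right_unit[OF ss K(1)] by blast
  have kp: "k * p = k" and kk: "k * k = k" using K(2) k by auto
  define p1 where "p1 = p - p * k"
  have p1: "p1 * p1 = p1" "(p * k) * (p * k) = p * k" "p1 * (p * k) = 0" "(p * k) * p1 = 0"
      "p1 * k = 0" "k * p1 = 0" "p1 * p = p1" "p * p1 = p1"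
    unfolding p1_def using pp kp kk
    by (simp_all add: algebra_simps mult.assoc[symmetric])
  have decomp: "orth_idem_decomp p p1 (p * k)"
    unfolding orth_idem_decomp_def using p1(1-4) p1_def by simp
  have "p1 \<noteq> 0"
  proof
    assume "p1 = 0"
    then have "p = p * k" unfolding p1_def by simp
    then show False using left_ideal_mult[OF K(1) k(1), of p] K(3) by simp
  qed
  moreover have "\<exists>s. s * t = p1" if t: "t * p1 = t" "t \<noteq> 0" for t
  proof -
    define K' where "K' = {m * k + s * t | m s. True}"
    have tp: "t * p = t" using t(1) p1(7) by (metis mult.assoc)
    have "t \<in> K'" unfolding K'_def by (rule CollectI, rule exI[of _ 0], rule exI[of _ 1]) simp
    moreover have "t \<notin> K"
    proof
      assume "t \<in> K"
      then have "t = t * p1 * k" using k(2) t(1) by simp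
      then show False using p1(5) t(2) by (simp add: mult.assoc)
    qed
    moreover have "K \<subseteq> K'"
    proof
      fix x assume "x \<in> K"
      then have "x = x * k + 0 * t" using k(2) by simp
      then show "x \<in> K'" unfolding K'_def by blast
    qed
    moreover have "x * p = x" if "x \<in> K'" for x
      using that kp tp unfolding K'_def by (auto simp: algebra_simps mult.assoc)
    ultimately have "p \<in> K'" using max[OF left_ideal_span2[of k t, folded K'_def]] by blast
    then obtain m s where "p = m * k + s * t" unfolding K'_def by blast
    then have "p * p1 = m * (k * p1) + s * (t * p1)" by (simp add: algebra_simps mult.assoc)
    then have "p1 = s * t" using p1(6,8) t(1) by simp
    then show ?thesis by blast
  qed
  ultimately have "minimal_idem p1" unfolding minimal_idem_def by blast
  with decomp show thesis by (rule that)
qed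

lemma idem_iso_conjugate:
  fixes X Y p a :: "'a::ring_1"
  assumes "X * Y = p" "p * a = a" "a * p = a" "a * a = a"
  shows "(Y * a * X) * (Y * a * X) = Y * a * X" "idem_iso a (Y * a * X)"
proof -
  have "a * (X * Y) * a = a" using assms by simp
  then have aXYa: "a * X * (Y * a) = a" by (simp add: mult.assoc)
  show "(Y * a * X) * (Y * a * X) = Y * a * X" using aXYa by (metis mult.assoc)
  show "idem_iso a (Y * a * X)" unfolding idem_iso_def
  proof (intro exI conjI)
    show "a * X = a * (a * X) * (Y * a * X)" "Y * a = Y * a * X * (Y * a) * a"
      using aXYa assms(4) by (metis mult.assoc)+
    show "a * X * (Y * a) = a" by (rule aXYa)
    show "Y * a * (a * X) = Y * a * X" using assms(4) by (metis mult.assoc)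
  qed
qed

lemma orth_idem_decomp_transport:
  fixes p p' X Y a b :: "'a::ring_1"
  assumes Y: "Y = p' * Y * p" and XY: "X * Y = p" and YX: "Y * X = p'"
    and od: "orth_idem_decomp p a b"
  shows "orth_idem_decomp p' (Y * a * X) (Y * b * X)"
    "idem_iso a (Y * a * X)" "idem_iso b (Y * b * X)"
proof -
  note o = orth_idem_decompD[OF od]
  have "Y * p = p' * Y * (p * p)" using arg_cong[OF Y, of "\<lambda>z. z * p"] by (simp add: mult.assoc)
  then have Yp: "Y * p = Y" using o(10) Y by simp
  note ca = idem_iso_conjugate[OF XY o(7,6,1)] and cb = idem_iso_conjugate[OF XY o(9,8,2)]
  show "idem_iso a (Y * a * X)" "idem_iso b (Y * b * X)" using ca(2) cb(2) .
  have "a * (X * Y) * b = 0" "b * (X * Y) * a = 0" using XY o(3,4,6,8) by simp_all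
  then have "Y * a * X * (Y * b * X) = 0" "Y * b * X * (Y * a * X) = 0"
    by (metis mult.assoc mult_zero_left mult_zero_right)+
  moreover have "Y * a * X + Y * b * X = Y * (a + b) * X" by (simp add: algebra_simps)
  then have "p' = Y * a * X + Y * b * X" using o(5) Yp YX by simp
  ultimately show "orth_idem_decomp p' (Y * a * X) (Y * b * X)"
    unfolding orth_idem_decomp_def using ca(1) cb(1) by blast
qed

lemma orth_idem_decomp_assoc:
  fixes h p q p1 p2 :: "'a::ring_1"
  assumes A: "orth_idem_decomp h p q" and B: "orth_idem_decomp p p1 p2"
  shows "orth_idem_decomp h p1 (p2 + q)" "orth_idem_decomp (p2 + q) p2 q"
proof -
  note a = orth_idem_decompD[OF A] and b = orth_idem_decompD[OF B]
  have "p1 * q = 0" "q * p1 = 0" "p2 * q = 0" "q * p2 = 0"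
    using b(6-9) a(3,4) by (metis mult.assoc mult_zero_left mult_zero_right)+
  then show "orth_idem_decomp h p1 (p2 + q)" "orth_idem_decomp (p2 + q) p2 q"
    unfolding orth_idem_decomp_def using a b by (simp_all add: algebra_simps)
qed

text \<open>Induction on the annihilator of \<open>h\<close>, which strictly grows when a simple summand
  \<open>p\<^sub>1\<close> of \<open>p\<close> (and its image in \<open>p'\<close>) is split off: by the simple case the remainders
  \<open>p\<^sub>2 + q\<close> and \<open>p\<^sub>2' + q'\<close> are isomorphic, and transporting the second decomposition along
  this isomorphism brings us back to the situation of the induction hypothesis.\<close>
lemma semisimple_idem_iso_cancel:
  fixes h p q p' q' :: "'a::ring_1"
  assumes ss: "semisimple_ring TYPE('a)"
    and "orth_idem_decomp h p q" "orth_idem_decomp h p' q'" "idem_iso p p'"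
  shows "idem_iso q q'"
  using wf_left_ideal_ascent[OF ss] assms(2-4)
proof (induction "{r. r * h = 0}" arbitrary: h p q p' q' rule: wf_induct_rule)
  case less
  note a = orth_idem_decompD[OF less.prems(1)] and b = orth_idem_decompD[OF less.prems(2)]
  show ?case
  proof (cases "p = 0")
    case True
    then have "p' = 0" using less.prems(3) idem_iso_zero by blast
    then show ?thesis using True a(5) b(5) idem_iso_refl[OF a(10)] by simp
  next
    case False
    obtain p1 p2 where sp: "orth_idem_decomp p p1 p2" "minimal_idem p1"
      using exists_minimal_idem_summand[OF ss a(1) False] by blast
    obtain X Y where XY: "X = p * X * p'" "Y = p' * Y * p" "X * Y = p" "Y * X = p'"
      using less.prems(3) by (rule idem_isoE)
    define p2' where "p2' = Y * p2 * X"
    note tr = orth_idem_decomp_transport[OF XY(2-4) sp(1), folded p2'_def]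
    note o1 = orth_idem_decomp_assoc[OF less.prems(1) sp(1)]
    note o2 = orth_idem_decomp_assoc[OF less.prems(2) tr(1)]
    have "idem_iso (p2 + q) (p2' + q')" using idem_iso_cancel_minimal[OF o1(1) o2(1) sp(2) tr(2)] .
    then obtain X2 Y2 where XY2: "X2 = (p2 + q) * X2 * (p2' + q')" "Y2 * X2 = p2' + q'"
        "X2 * Y2 = p2 + q"
      by (rule idem_isoE)
    note tb = orth_idem_decomp_transport[OF XY2 o2(2)]
    have "idem_iso p2 (X2 * p2' * Y2)"
      using idem_iso_trans[OF orth_idem_decompD(2)[OF sp(1)] orth_idem_decompD(1)[OF o2(2)]
          orth_idem_decompD(1)[OF tb(1)] tr(3) tb(2)] .
    moreover have "({r. r * (p2 + q) = 0}, {r. r * h = 0}) \<in> left_ideal_ascent"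
    proof -
      note c = orth_idem_decompD[OF o1(1)]
      have "{r. r * h = 0} \<subseteq> {r. r * (p2 + q) = 0}"
        using c(9) by (auto, metis mult.assoc mult_zero_left)
      moreover have "p1 \<in> {r. r * (p2 + q) = 0} - {r. r * h = 0}"
        using c(3,6) sp(2) unfolding minimal_idem_def by simp
      ultimately show ?thesis
        unfolding left_ideal_ascent_def using left_ideal_annihilator by blast
    qed
    ultimately have "idem_iso q (X2 * q' * Y2)" using less.hyps o1(2) tb(1) by blast
    then show ?thesis
      using idem_iso_trans[OF a(2) orth_idem_decompD(2)[OF tb(1)] b(2) _ idem_iso_sym[OF tb(3)]]
      by blast
  qed
qed

text \<open>Unit-regularity: with \<open>a x a = a\<close>, the idempotents \<open>a x\<close> and \<open>x a\<close> are isomorphic, so are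
  their complements by cancellation, via \<open>u\<close>, \<open>v\<close>; then \<open>w = x a x + v\<close> is a unit with inverse
  \<open>a + u\<close>.\<close>
lemma semisimple_unit_regular:
  fixes a :: "'a::ring_1"
  assumes ss: "semisimple_ring TYPE('a)"
  obtains w w' where "w * w' = 1" "w' * w = 1" "a * w * a = a"
proof -
  obtain x where axa: "a * x * a = a" using semisimple_regular[OF ss] .
  have E: "(a * x) * (a * x) = a * x" using axa by (simp add: mult.assoc[symmetric])
  have "x * (a * x * a) = x * a" using axa by simp
  then have xaxa: "x * a * x * a = x * a" by (simp add: mult.assoc)
  then have F: "(x * a) * (x * a) = x * a" by (simp add: mult.assoc[symmetric])
  have "orth_idem_decomp 1 (a * x) (1 - a * x)" "orth_idem_decomp 1 (x * a) (1 - x * a)"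
    unfolding orth_idem_decomp_def using E F by (simp_all add: algebra_simps)
  moreover have "idem_iso (a * x) (x * a)"
    unfolding idem_iso_def
    by (rule exI[of _ a], rule exI[of _ "x * a * x"]) (simp add: axa xaxa mult.assoc[symmetric])
  ultimately have "idem_iso (1 - a * x) (1 - x * a)" using semisimple_idem_iso_cancel[OF ss] by blast
  then obtain u v where uv: "u = (1 - a * x) * u * (1 - x * a)" "v = (1 - x * a) * v * (1 - a * x)"
      "u * v = 1 - a * x" "v * u = 1 - x * a"
    by (rule idem_isoE)
  have G: "(1 - a * x) * u = u" "v * (1 - a * x) = v"
    using idem_corner_absorb(1)[OF uv(1)] idem_corner_absorb(2)[OF uv(2)] E F
    by (simp_all add: algebra_simps)
  have H: "u * (1 - x * a) = u" "(1 - x * a) * v = v"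
    using idem_corner_absorb(2)[OF uv(1)] idem_corner_absorb(1)[OF uv(2)] E F
    by (simp_all add: algebra_simps)
  have "a * (1 - x * a) = 0" "(1 - a * x) * a = 0" "x * a * x * (1 - a * x) = 0" "(1 - x * a) * (x * a * x) = 0"
    using axa xaxa by (simp_all add: right_diff_distrib left_diff_distrib mult.assoc[symmetric])
  then have "a * v = 0" "v * a = 0" "x * a * x * u = 0" "u * (x * a * x) = 0"
    using G H by (metis mult.assoc mult_zero_left mult_zero_right)+
  then have "(x * a * x + v) * (a + u) = 1" "(a + u) * (x * a * x + v) = 1" "a * (x * a * x + v) * a = a"
    using uv(3,4) axa xaxa by (simp_all add: distrib_left distrib_right mult.assoc[symmetric])
  then show thesis by (rule that)
qed

lemma in_GL2_add_column:
  fixes a b c d t :: "'a::ring_1"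
  assumes "in_GL2 a b c d"
  shows "in_GL2 a (b + a * t) c (d + c * t)"
proof -
  obtain e f g h where E: "a * e + b * g = 1" "a * f + b * h = 0" "c * e + d * g = 0" "c * f + d * h = 1"
      "e * a + f * c = 1" "e * b + f * d = 0" "g * a + h * c = 0" "g * b + h * d = 1"
    using assms unfolding in_GL2_def by blast
  have "a * (e - t * g) + (b + a * t) * g = a * e + b * g"
    "a * (f - t * h) + (b + a * t) * h = a * f + b * h"
    "c * (e - t * g) + (d + c * t) * g = c * e + d * g"
    "c * (f - t * h) + (d + c * t) * h = c * f + d * h"
    "(e - t * g) * a + (f - t * h) * c = (e * a + f * c) - t * (g * a + h * c)"
    "(e - t * g) * (b + a * t) + (f - t * h) * (d + c * t)
      = (e * b + f * d) + (e * a + f * c) * t - t * (g * b + h * d) - t * (g * a + h * c) * t"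
    "g * (b + a * t) + h * (d + c * t) = (g * b + h * d) + (g * a + h * c) * t"
    by (simp_all add: algebra_simps)
  then show ?thesis unfolding in_GL2_def using E
    by (intro exI[of _ "e - t * g"] exI[of _ "f - t * h"] exI[of _ g] exI[of _ h] conjI) simp_all
qed

lemma in_GL2_mult_right_unit:
  fixes a b c d w w' :: "'a::ring_1"
  assumes "in_GL2 a b c d" "w * w' = 1" "w' * w = 1"
  shows "in_GL2 (a * w') b (c * w') d"
proof -
  obtain e f g h where E: "a * e + b * g = 1" "a * f + b * h = 0" "c * e + d * g = 0" "c * f + d * h = 1"
      "e * a + f * c = 1" "e * b + f * d = 0" "g * a + h * c = 0" "g * b + h * d = 1"
    using assms(1) unfolding in_GL2_def by blast
  have "a * w' * (w * z) = a * z" "c * w' * (w * z) = c * z" for z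
    using assms(3) by (metis mult.assoc mult_1)+
  moreover have "w * e * (a * w') + w * f * (c * w') = w * (e * a + f * c) * w'"
    "w * e * b + w * f * d = w * (e * b + f * d)" "g * (a * w') + h * (c * w') = (g * a + h * c) * w'"
    by (simp_all add: algebra_simps)
  ultimately show ?thesis unfolding in_GL2_def using E assms(2)
    by (intro exI[of _ "w * e"] exI[of _ "w * f"] exI[of _ g] exI[of _ h] conjI) simp_all
qed

lemma in_GL2_idem_involution:
  fixes e b y :: "'a::ring_1"
  assumes ee: "e * e = e" and b: "(1 - e) * b = b" and y: "b * y * b = b" and gen: "b * y * (1 - e) = 1 - e"
  shows "in_GL2 e b (y * (1 - e)) (1 - y * b)"
proof -
  have "e * b = e * (1 - e) * b" using b by (simp add: mult.assoc)
  then have eb: "e * b = 0" using ee by (simp add: right_diff_distrib)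
  have "e * e + b * (y * (1 - e)) = 1" using ee by (simp add: mult.assoc[symmetric] gen)
  moreover have "e * b + b * (1 - y * b) = 0" using eb y by (simp add: right_diff_distrib mult.assoc[symmetric])
  moreover have "y * (1 - e) * e + (1 - y * b) * (y * (1 - e)) = 0"
  proof -
    have "y * (1 - e) * e = 0" using ee by (simp add: right_diff_distrib left_diff_distrib mult.assoc)
    moreover have "(1 - y * b) * (y * (1 - e)) = y * (1 - e) - y * (b * y * (1 - e))"
      by (simp add: left_diff_distrib mult.assoc)
    ultimately show ?thesis using gen by simp
  qed
  moreover have "y * (1 - e) * b + (1 - y * b) * (1 - y * b) = 1"
  proof -
    have "y * (1 - e) * b = y * b" using b by (simp add: mult.assoc)
    moreover have "y * (b * y * b) = y * b" using y by simp
    then have "y * b * (y * b) = y * b" by (simp add: mult.assoc)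
    ultimately show ?thesis by (simp add: algebra_simps)
  qed
  ultimately show ?thesis unfolding in_GL2_def
    by (intro exI[of _ e] exI[of _ b] exI[of _ "y * (1 - e)"] exI[of _ "1 - y * b"] conjI) simp_all
qed

lemma admissible_imp_cyclic_free:
  fixes a b :: "'a::ring_1"
  assumes "admissible a b"
  shows "cyclic_free a b"
  unfolding cyclic_free_def
proof (intro allI impI)
  obtain e g where eg: "a * e + b * g = 1" using assms unfolding admissible_def in_GL2_def by blast
  fix r assume "r * a = 0 \<and> r * b = 0"
  then have "r * (a * e + b * g) = 0" by (simp add: distrib_left mult.assoc[symmetric])
  then show "r = 0" using eg by simp
qed

text \<open>For a unit \<open>w\<close> with \<open>a w a = a\<close> it suffices to complete \<open>(a w, (1 - a w) b)\<close>; freeness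
  makes \<open>(1 - a w) b\<close> generate \<open>1 - a w\<close> from the right.\<close>
lemma semisimple_cyclic_free_imp_admissible:
  fixes a b :: "'a::ring_1"
  assumes ss: "semisimple_ring TYPE('a)" and free: "cyclic_free a b"
  shows "admissible a b"
proof -
  obtain w w' where w: "w * w' = 1" "w' * w = 1" "a * w * a = a"
    using semisimple_unit_regular[OF ss] .
  define e where "e = a * w"
  define b' where "b' = (1 - e) * b"
  have ee: "e * e = e" unfolding e_def using w(3) by (simp add: mult.assoc[symmetric])
  have ea: "(1 - e) * a = 0" unfolding e_def using w(3) by (simp add: left_diff_distrib)
  have G: "(1 - e) * (1 - e) = 1 - e" using ee by (simp add: algebra_simps)
  have b': "(1 - e) * b' = b'" unfolding b'_def using G by (simp add: mult.assoc[symmetric])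
  obtain y where y: "b' * y * b' = b'" using semisimple_regular[OF ss] .
  have "b' * y * (1 - e) = 1 - e"
  proof -
    define r where "r = (1 - e) - b' * y * (1 - e)"
    have "r * b' = b' - b' * y * ((1 - e) * b')"
      unfolding r_def using b' by (simp add: left_diff_distrib mult.assoc)
    then have "r * b' = 0" using b' y by simp
    moreover have r: "r * (1 - e) = r"
      unfolding r_def using G by (simp add: left_diff_distrib mult.assoc)
    moreover have "r * a = r * ((1 - e) * a)" "r * b = r * b'"
      unfolding b'_def using r by (simp_all add: mult.assoc[symmetric])
    ultimately have "r * a = 0" "r * b = 0" using ea by simp_all
    then have "r = 0" using free unfolding cyclic_free_def by blast
    then show ?thesis unfolding r_def by simp
  qed
  then have "in_GL2 e b' (y * (1 - e)) (1 - y * b')" using in_GL2_idem_involution[OF ee b' y] by blast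
  then have "in_GL2 (e * w') b' (y * (1 - e) * w') (1 - y * b')" using in_GL2_mult_right_unit w(1,2) by blast
  moreover have "e * w' = a" unfolding e_def using w(1) by (simp add: mult.assoc)
  ultimately have "in_GL2 a (b' + a * (w * b)) (y * (1 - e) * w') (1 - y * b' + y * (1 - e) * w' * (w * b))"
    using in_GL2_add_column by simp
  moreover have "b' + a * (w * b) = b" unfolding b'_def e_def by (simp add: algebra_simps)
  ultimately show ?thesis unfolding admissible_def by auto
qed

theorem mainTheorem11:
  fixes a b :: "'a::ring_1"
  assumes "semisimple_ring TYPE('a)"
  shows "cyclic_free a b \<longleftrightarrow> admissible a b"
  using semisimple_cyclic_free_imp_admissible[OF assms] admissible_imp_cyclic_free by blast

end
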